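(* Let $(X_t)_{t\in\mathbb{T}}$ be an $\mathbb{R}^d$-valued Markov process with evolution system $U(s,t)$, and let $(T(t))_{t\ge0}$ be the semigroup of its space-time process, i.e. \[T(t)f(s,x):=\mathbb{E}\big(f(s+t,X_{s+t})\mid X_s=x\big)=U(s,s+t)g_{s+t}(x),\qquad g_r:=f(r,\cdot),\] for bounded measurable $f$ on $\mathbb{T}\times\mathbb{R}^d$. Then the following are equivalent: (i) $(U(s,t))_{s,t\in\mathbb{T},s\le t}$ is a Feller evolution system on $C_\infty(\mathbb{R}^d)$; (ii) $(T(t))_{t\ge0}$ is a Feller semigroup on $C_\infty(\mathbb{T}\times\mathbb{R}^d)$.
   Context: $\mathbb{T}$ denotes either $\mathbb{R}$ or $[0,\infty)$. The evolution system of $X$ is $U(s,t)f(x):=\mathbb{E}(f(X_t)\mid X_s=x)$, $s\le t$. $C_\infty(E)$ denotes continuous functions on $E$ vanishing at infinity, with uniform norm $\|\cdot\|_\infty$. A family $(U(s,t))_{s\le t}$ of linear operators on $C_\infty(\mathbb{R}^d)$ (mapping $C_\infty(\mathbb{R}^d)$ into itself) is a Feller evolution system if $\|U(s,t)f\|_\infty\le\|f\|_\infty$, $U(s,s)=\mathrm{id}$, $U(s,t)=U(s,r)U(r,t)$ for $s\le r\le t$, $U(s,t)f\ge0$ for $f\ge0$, and it is strongly continuous: for all $v\le w$ and $f\in C_\infty(\mathbb{R}^d)$, $\lim_{(s,t)\to(v,w),\,s\le t}\|U(s,t)f-U(v,w)f\|_\infty=0$. A Feller semigroup is a strongly continuous,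 positivity preserving contraction semigroup of operators mapping $C_\infty$ into $C_\infty$. *)

theory Defs
  imports "HOL-Probability.Probability"
begin

definition C_inf :: "'a::metric_space set \<Rightarrow> ('a \<Rightarrow> real) set" where
  "C_inf S = {f. continuous_on S f \<and>
     (\<forall>e>0. \<exists>K. compact K \<and> K \<subseteq> S \<and> (\<forall>x\<in>S - K. \<bar>f x\<bar> < e))}"

definition supnorm :: "'a set \<Rightarrow> ('a \<Rightarrow> real) \<Rightarrow> real" where
  "supnorm S f = (SUP x\<in>S. \<bar>f x\<bar>)"

definition time_set :: "real set \<Rightarrow> bool" where
  "time_set TT \<longleftrightarrow> TT = UNIV \<or> TT = {0..}"

text \<open>Transition kernels of an R^d-valued Markov process indexed by TT:
  P s t x is the law of X_t given X_s = x.\<close>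
definition markov_transition ::
  "real set \<Rightarrow> (real \<Rightarrow> real \<Rightarrow> real^'d \<Rightarrow> (real^'d) measure) \<Rightarrow> bool" where
  "markov_transition TT P \<longleftrightarrow>
     (\<forall>s\<in>TT. \<forall>t\<in>TT. s \<le> t \<longrightarrow>
        (\<forall>x. prob_space (P s t x) \<and> sets (P s t x) = sets borel) \<and>
        (\<lambda>x. P s t x) \<in> borel \<rightarrow>\<^sub>M subprob_algebra borel) \<and>
     (\<forall>s\<in>TT. \<forall>x. P s s x = return borel x) \<and>
     (\<forall>s\<in>TT. \<forall>r\<in>TT. \<forall>t\<in>TT. s \<le> r \<longrightarrow> r \<le> t \<longrightarrow>
        (\<forall>x. P s t x = P s r x \<bind> (\<lambda>y. P r t y)))"

definition evol :: "(real \<Rightarrow> real \<Rightarrow> real^'d \<Rightarrow> (real^'d) measure)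
   \<Rightarrow> real \<Rightarrow> real \<Rightarrow> (real^'d \<Rightarrow> real) \<Rightarrow> (real^'d \<Rightarrow> real)" where
  "evol P s t f x = (\<integral>y. f y \<partial>(P s t x))"

definition spacetime_sg :: "(real \<Rightarrow> real \<Rightarrow> real^'d \<Rightarrow> (real^'d) measure)
   \<Rightarrow> real \<Rightarrow> ((real \<times> (real^'d)) \<Rightarrow> real) \<Rightarrow> ((real \<times> (real^'d)) \<Rightarrow> real)" where
  "spacetime_sg P t f = (\<lambda>(s, x). evol P s (s + t) (\<lambda>y. f (s + t, y)) x)"

definition feller_evolution ::
  "real set \<Rightarrow> (real \<Rightarrow> real \<Rightarrow> (real^'d \<Rightarrow> real) \<Rightarrow> (real^'d \<Rightarrow> real)) \<Rightarrow> bool" where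
  "feller_evolution TT U \<longleftrightarrow>
     (\<forall>s\<in>TT. \<forall>t\<in>TT. s \<le> t \<longrightarrow>
        (\<forall>f\<in>C_inf UNIV. U s t f \<in> C_inf UNIV) \<and>
        (\<forall>f\<in>C_inf UNIV. \<forall>g\<in>C_inf UNIV. \<forall>a b.
            U s t (\<lambda>x. a * f x + b * g x) = (\<lambda>x. a * U s t f x + b * U s t g x)) \<and>
        (\<forall>f\<in>C_inf UNIV. supnorm UNIV (U s t f) \<le> supnorm UNIV f) \<and>
        (\<forall>f\<in>C_inf UNIV. (\<forall>x. f x \<ge> 0) \<longrightarrow> (\<forall>x. U s t f x \<ge> 0))) \<and>
     (\<forall>s\<in>TT. \<forall>f\<in>C_inf UNIV. U s s f = f) \<and>
     (\<forall>s\<in>TT. \<forall>r\<in>TT. \<forall>t\<in>TT. s \<le> r \<longrightarrow> r \<le> t \<longrightarrow>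
        (\<forall>f\<in>C_inf UNIV. U s t f = U s r (U r t f))) \<and>
     (\<forall>v\<in>TT. \<forall>w\<in>TT. v \<le> w \<longrightarrow> (\<forall>f\<in>C_inf UNIV.
        ((\<lambda>(s, t). supnorm UNIV (\<lambda>x. U s t f x - U v w f x)) \<longlongrightarrow> 0)
          (at (v, w) within {(s, t). s \<in> TT \<and> t \<in> TT \<and> s \<le> t})))"

text \<open>Feller semigroup on C_inf(S): functions are compared on S only.\<close>
definition feller_semigroup ::
  "'a::metric_space set \<Rightarrow> (real \<Rightarrow> ('a \<Rightarrow> real) \<Rightarrow> ('a \<Rightarrow> real)) \<Rightarrow> bool" where
  "feller_semigroup S T \<longleftrightarrow>
     (\<forall>t\<ge>0.
        (\<forall>f\<in>C_inf S. T t f \<in> C_inf S) \<and>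
        (\<forall>f\<in>C_inf S. \<forall>g\<in>C_inf S. \<forall>a b. \<forall>z\<in>S.
            T t (\<lambda>x. a * f x + b * g x) z = a * T t f z + b * T t g z) \<and>
        (\<forall>f\<in>C_inf S. supnorm S (T t f) \<le> supnorm S f) \<and>
        (\<forall>f\<in>C_inf S. (\<forall>z\<in>S. f z \<ge> 0) \<longrightarrow> (\<forall>z\<in>S. T t f z \<ge> 0))) \<and>
     (\<forall>f\<in>C_inf S. \<forall>z\<in>S. T 0 f z = f z) \<and>
     (\<forall>t1\<ge>0. \<forall>t2\<ge>0. \<forall>f\<in>C_inf S. \<forall>z\<in>S. T (t1 + t2) f z = T t1 (T t2 f) z) \<and>
     (\<forall>f\<in>C_inf S. \<forall>t\<ge>0.
        ((\<lambda>r. supnorm S (\<lambda>z. T r f z - T t f z)) \<longlongrightarrow> 0) (at t within {0..}))"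

end

theory Submission
  imports Defs
begin

text \<open>
  (ii) \<open>\<Longrightarrow>\<close> (i): testing \<open>T\<close> against \<open>g(r,x) = \<phi>(r) f(x)\<close> with a continuous cutoff \<open>\<phi>\<close>
  equal to \<open>1\<close> near \<open>w\<close> and of compact support gives \<open>U(s,t)f = T(t-s)g(s,\<cdot>)\<close> for \<open>t\<close> near
  \<open>w\<close>. Hence \<open>U(s,t)f\<close> is a section of a \<open>C\<^sub>\<infinity>\<close> function, and
  \<open>U(s,t)f - U(v,w)f\<close> splits into \<open>T(t-s)g - T(w-v)g\<close>, small by strong continuity of \<open>T\<close>,
  plus a difference of the uniformly continuous function \<open>T(w-v)g\<close> at \<open>(s,x)\<close> and \<open>(v,x)\<close>.

  (i) \<open>\<Longrightarrow>\<close> (ii): since \<open>U\<close> is a strongly continuous contraction and \<open>f\<close> is uniformly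
  continuous, \<open>(s,r) \<mapsto> T(r)f(s,\<cdot>)\<close> is continuous in the uniform norm. On compact sets of
  times this yields joint continuity, uniform vanishing in space and uniform continuity in
  \<open>r\<close>; for large times \<open>|s+r|\<close> the data \<open>f(s+r,\<cdot>)\<close>, and with it \<open>T(r)f(s,\<cdot>)\<close>, is
  uniformly small.
\<close>

section \<open>Uniform norm and functions vanishing at infinity\<close>

lemma supnorm_upper:
  assumes "bdd_above ((\<lambda>z. \<bar>h z\<bar>) ` S)" "z \<in> S"
  shows "\<bar>h z\<bar> \<le> supnorm S h"
  unfolding supnorm_def using assms by (rule cSUP_upper2[OF _ _ order_refl])

lemma supnorm_least:
  assumes "S \<noteq> {}" "\<And>z. z \<in> S \<Longrightarrow> \<bar>h z\<bar> \<le> c"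
  shows "supnorm S h \<le> c"
  unfolding supnorm_def using assms by (intro cSUP_least) auto

lemma tendsto_supnorm_zeroI:
  assumes "S \<noteq> {}" "\<And>e. e > 0 \<Longrightarrow> eventually (\<lambda>p. \<forall>z\<in>S. \<bar>F p z\<bar> \<le> e) G"
  shows "((\<lambda>p. supnorm S (F p)) \<longlongrightarrow> 0) G"
proof (rule tendstoI)
  fix e :: real assume e: "e > 0"
  from assms(1) obtain z0 where z0: "z0 \<in> S" by auto
  show "eventually (\<lambda>p. dist (supnorm S (F p)) 0 < e) G"
    using assms(2)[of "e/2"] e
  proof (rule_tac eventually_mono[rotated])
    fix p assume H: "\<forall>z\<in>S. \<bar>F p z\<bar> \<le> e / 2"
    have "bdd_above ((\<lambda>z. \<bar>F p z\<bar>) ` S)" using H by (intro bdd_aboveI2[where M="e/2"]) auto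
    then have "0 \<le> supnorm S (F p)" using supnorm_upper z0 by (metis abs_ge_zero order_trans)
    moreover have "supnorm S (F p) \<le> e/2" using supnorm_least[OF assms(1)] H by blast
    ultimately show "dist (supnorm S (F p)) 0 < e" using e by simp
  qed simp
qed

lemma tendsto_supnorm_zeroD:
  assumes "((\<lambda>p. supnorm S (F p)) \<longlongrightarrow> 0) G"
    and "eventually (\<lambda>p. bdd_above ((\<lambda>z. \<bar>F p z\<bar>) ` S)) G" and "e > 0"
  shows "eventually (\<lambda>p. \<forall>z\<in>S. \<bar>F p z\<bar> < e) G"
proof -
  have "eventually (\<lambda>p. dist (supnorm S (F p)) 0 < e) G"
    using assms(1,3) tendstoD by blast
  with assms(2) show ?thesis
    by (rule eventually_elim2) (use supnorm_upper in fastforce)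
qed

lemma dist_Pair_le: "dist (a, b) (c, d) \<le> dist a c + dist b d"
  unfolding dist_Pair_Pair using sqrt_sum_squares_le_sum_abs[of "dist a c" "dist b d"] by simp

lemma C_inf_bounded:
  assumes "f \<in> C_inf S"
  shows "\<exists>B. \<forall>z\<in>S. \<bar>f z\<bar> \<le> B"
proof -
  obtain K where K: "compact K" "K \<subseteq> S" "\<forall>x\<in>S - K. \<bar>f x\<bar> < 1"
    using assms zero_less_one unfolding C_inf_def by blast
  have "continuous_on K f"
    using assms K(2) unfolding C_inf_def by (blast intro: continuous_on_subset)
  then have "bounded (f ` K)"
    using K(1) by (intro compact_imp_bounded compact_continuous_image)
  then obtain B where "\<forall>z\<in>K. \<bar>f z\<bar> \<le> B" unfolding bounded_real by blast
  with K(3) have "\<forall>z\<in>S. \<bar>f z\<bar> \<le> max B 1"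
    by (metis DiffI le_max_iff_disj less_imp_le)
  then show ?thesis by blast
qed

lemma C_inf_diff_bdd_above:
  assumes "f \<in> C_inf S" "g \<in> C_inf S"
  shows "bdd_above ((\<lambda>z. \<bar>f z - g z\<bar>) ` S)"
proof -
  obtain B C where "\<forall>z\<in>S. \<bar>f z\<bar> \<le> B" "\<forall>z\<in>S. \<bar>g z\<bar> \<le> C"
    using C_inf_bounded[OF assms(1)] C_inf_bounded[OF assms(2)] by blast
  then show ?thesis
    by (intro bdd_aboveI2[where M="B + C"]) (smt (verit, best))
qed

lemma C_inf_abs_le_supnorm:
  assumes "f \<in> C_inf S" "z \<in> S"
  shows "\<bar>f z\<bar> \<le> supnorm S f"
proof -
  obtain B where "\<forall>z\<in>S. \<bar>f z\<bar> \<le> B" using C_inf_bounded[OF assms(1)] by blast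
  then show ?thesis using assms(2) by (intro supnorm_upper bdd_aboveI2) auto
qed

lemma C_inf_borel_measurable: "f \<in> C_inf UNIV \<Longrightarrow> f \<in> borel_measurable borel"
  unfolding C_inf_def by (auto intro: borel_measurable_continuous_onI)

lemma C_inf_uniformly_continuous:
  fixes f :: "'a::euclidean_space \<Rightarrow> real"
  assumes "closed S" "f \<in> C_inf S" "e > 0"
  shows "\<exists>d>0. \<forall>z\<in>S. \<forall>z'\<in>S. dist z z' < d \<longrightarrow> \<bar>f z - f z'\<bar> < e"
proof -
  obtain K where K: "compact K" "K \<subseteq> S" "\<forall>x\<in>S - K. \<bar>f x\<bar> < e/2"
    using assms(2,3) half_gt_zero unfolding C_inf_def by blast
  obtain R where R: "\<forall>z\<in>K. norm z \<le> R"
    using compact_imp_bounded[OF K(1)] unfolding bounded_iff by blast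
  define K' where "K' = S \<inter> cball 0 (R+1)"
  have "compact K'" unfolding K'_def using assms(1)
    by (simp add: compact_eq_bounded_closed closed_Int bounded_Int)
  moreover have "continuous_on K' f"
    using assms(2) unfolding C_inf_def K'_def by (auto intro: continuous_on_subset)
  ultimately have "uniformly_continuous_on K' f" by (simp add: compact_uniformly_continuous)
  then obtain d where d: "d > 0" "\<forall>x\<in>K'. \<forall>x'\<in>K'. dist x' x < d \<longrightarrow> dist (f x') (f x) < e"
    unfolding uniformly_continuous_on_def using assms(3) by blast
  show ?thesis
  proof (intro exI[of _ "min d 1"] conjI ballI impI)
    fix z z' assume z: "z \<in> S" "z' \<in> S" "dist z z' < min d 1"
    show "\<bar>f z - f z'\<bar> < e"
    proof (cases "z \<in> K \<or> z' \<in> K")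
      case True
      \<comment> \<open>one point lies in \<open>K\<close>, so both lie in the compact enlargement \<open>K'\<close>\<close>
      have "norm z \<le> R + 1 \<and> norm z' \<le> R + 1"
        using True R z(3) norm_triangle_ineq2[of z z'] norm_triangle_ineq2[of z' z]
        by (auto simp: dist_norm norm_minus_commute)
      then have "z \<in> K'" "z' \<in> K'" using z unfolding K'_def by auto
      then show ?thesis using d z(3) by (auto simp: dist_real_def)
    next
      case False
      then have "\<bar>f z\<bar> < e/2" "\<bar>f z'\<bar> < e/2" using K(3) z by blast+
      then show ?thesis by linarith
    qed
  qed (use d in simp)
qed

lemma C_inf_slice:
  fixes f :: "real \<times> 'a::euclidean_space \<Rightarrow> real"
  assumes "f \<in> C_inf (TT \<times> UNIV)" "r \<in> TT"
  shows "(\<lambda>y. f (r, y)) \<in> C_inf UNIV"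
proof -
  have c: "continuous_on (TT \<times> UNIV) f" using assms unfolding C_inf_def by auto
  have "continuous_on UNIV (\<lambda>y. f (r, y))"
    by (rule continuous_on_compose2[OF c]) (use assms(2) in \<open>auto intro!: continuous_intros\<close>)
  moreover have "\<exists>K. compact K \<and> K \<subseteq> UNIV \<and> (\<forall>x\<in>UNIV - K. \<bar>f (r, x)\<bar> < e)" if "e > 0" for e
  proof -
    obtain K where K: "compact K" "\<forall>x\<in>TT \<times> UNIV - K. \<bar>f x\<bar> < e"
      using assms \<open>e > 0\<close> unfolding C_inf_def by auto
    have "compact (snd ` (K \<inter> ({r} \<times> UNIV)))"
      using K(1) by (intro compact_continuous_image compact_Int_closed closed_Times continuous_intros) auto
    moreover have "\<bar>f (r, x)\<bar> < e" if "x \<notin> snd ` (K \<inter> ({r} \<times> UNIV))" for x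
      using that K(2) assms(2) by (metis DiffI IntI SigmaI UNIV_I insertI1 snd_conv image_eqI)
    ultimately show ?thesis by blast
  qed
  ultimately show ?thesis unfolding C_inf_def by auto
qed

lemma C_inf_slice_measurable_bounded:
  fixes f :: "real \<times> 'a::euclidean_space \<Rightarrow> real"
  assumes "f \<in> C_inf (TT \<times> UNIV)" "r \<in> TT"
  shows "(\<lambda>y. f (r, y)) \<in> borel_measurable borel" "\<bar>f (r, y)\<bar> \<le> supnorm (TT \<times> UNIV) f"
  using C_inf_borel_measurable[OF C_inf_slice[OF assms]] C_inf_abs_le_supnorm[OF assms(1)] assms(2)
  by auto

lemma C_inf_time_tail:
  fixes f :: "real \<times> 'a::euclidean_space \<Rightarrow> real"
  assumes "f \<in> C_inf (TT \<times> UNIV)" "e > 0"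
  shows "\<exists>R. \<forall>r\<in>TT. \<bar>r\<bar> > R \<longrightarrow> (\<forall>y. \<bar>f (r, y)\<bar> < e)"
proof -
  obtain K where K: "compact K" "\<forall>x\<in>TT \<times> UNIV - K. \<bar>f x\<bar> < e"
    using assms unfolding C_inf_def by blast
  obtain R where R: "\<forall>z\<in>K. norm z \<le> R"
    using compact_imp_bounded[OF K(1)] unfolding bounded_iff by blast
  have "(r, y) \<notin> K" if "\<bar>r\<bar> > R" for r and y :: 'a
    using R that norm_fst_le[of r y] by force
  then show ?thesis using K(2) by blast
qed

section \<open>Continuity in the uniform norm\<close>

text \<open>Continuity of \<open>a \<mapsto> F a\<close> into the functions on \<open>X\<close> with the uniform norm, in
  \<open>\<epsilon>\<close>-\<open>\<delta>\<close> form so that no boundedness is needed to state it; for \<open>C_inf\<close>-valued families it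
  is the strong continuity of the Feller definitions (\<open>continuous_on_sup_norm_iff_tendsto\<close>).\<close>

definition continuous_on_sup_norm ::
    "'a::metric_space set \<Rightarrow> 'b set \<Rightarrow> ('a \<Rightarrow> 'b \<Rightarrow> real) \<Rightarrow> bool" where
  "continuous_on_sup_norm A X F \<longleftrightarrow>
     (\<forall>a0\<in>A. \<forall>e>0. \<exists>d>0. \<forall>a\<in>A. dist a a0 < d \<longrightarrow> (\<forall>x\<in>X. \<bar>F a x - F a0 x\<bar> \<le> e))"

lemma continuous_on_sup_normD:
  assumes "continuous_on_sup_norm A X F" "a0 \<in> A" "e > 0"
  obtains d where "d > 0" "\<And>a x. a \<in> A \<Longrightarrow> dist a a0 < d \<Longrightarrow> x \<in> X \<Longrightarrow> \<bar>F a x - F a0 x\<bar> \<le> e"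
  using assms unfolding continuous_on_sup_norm_def by meson

lemma continuous_on_sup_norm_iff_tendsto:
  assumes "X \<noteq> {}" "\<And>a. a \<in> A \<Longrightarrow> F a \<in> C_inf X"
  shows "continuous_on_sup_norm A X F \<longleftrightarrow>
    (\<forall>a0\<in>A. ((\<lambda>a. supnorm X (\<lambda>x. F a x - F a0 x)) \<longlongrightarrow> 0) (at a0 within A))"
proof
  assume cont: "continuous_on_sup_norm A X F"
  show "\<forall>a0\<in>A. ((\<lambda>a. supnorm X (\<lambda>x. F a x - F a0 x)) \<longlongrightarrow> 0) (at a0 within A)"
  proof (intro ballI tendsto_supnorm_zeroI[OF assms(1)])
    fix a0 and e :: real assume "a0 \<in> A" "e > 0"
    then obtain d where "d > 0" "\<forall>a\<in>A. dist a a0 < d \<longrightarrow> (\<forall>x\<in>X. \<bar>F a x - F a0 x\<bar> \<le> e)"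
      using cont unfolding continuous_on_sup_norm_def by blast
    then show "eventually (\<lambda>a. \<forall>x\<in>X. \<bar>F a x - F a0 x\<bar> \<le> e) (at a0 within A)"
      unfolding eventually_at by blast
  qed
next
  assume lim: "\<forall>a0\<in>A. ((\<lambda>a. supnorm X (\<lambda>x. F a x - F a0 x)) \<longlongrightarrow> 0) (at a0 within A)"
  show "continuous_on_sup_norm A X F"
    unfolding continuous_on_sup_norm_def
  proof (intro ballI allI impI)
    fix a0 and e :: real assume a0: "a0 \<in> A" and e: "e > 0"
    have "eventually (\<lambda>a. bdd_above ((\<lambda>x. \<bar>F a x - F a0 x\<bar>) ` X)) (at a0 within A)"
      unfolding eventually_at using a0 assms(2) by (auto intro!: exI[of _ 1] C_inf_diff_bdd_above)
    with lim a0 e have "eventually (\<lambda>a. \<forall>x\<in>X. \<bar>F a x - F a0 x\<bar> < e) (at a0 within A)"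
      by (intro tendsto_supnorm_zeroD[where F="\<lambda>a x. F a x - F a0 x"]) auto
    then obtain d where "d > 0" "\<forall>a\<in>A. a \<noteq> a0 \<and> dist a a0 < d \<longrightarrow> (\<forall>x\<in>X. \<bar>F a x - F a0 x\<bar> < e)"
      unfolding eventually_at by blast
    then show "\<exists>d>0. \<forall>a\<in>A. dist a a0 < d \<longrightarrow> (\<forall>x\<in>X. \<bar>F a x - F a0 x\<bar> \<le> e)"
      using e by (metis diff_self abs_zero less_imp_le)
  qed
qed

lemma continuous_on_sup_norm_subset:
  "continuous_on_sup_norm B X F \<Longrightarrow> A \<subseteq> B \<Longrightarrow> continuous_on_sup_norm A X F"
  unfolding continuous_on_sup_norm_def by (meson subset_iff)

lemma continuous_on_sup_norm_compose:
  assumes "continuous_on A g" "g ` A \<subseteq> B" "continuous_on_sup_norm B X F"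
  shows "continuous_on_sup_norm A X (\<lambda>a. F (g a))"
  unfolding continuous_on_sup_norm_def
proof (intro ballI allI impI)
  fix a0 and e :: real assume a0: "a0 \<in> A" and e: "e > 0"
  then obtain d where d: "d > 0" "\<forall>b\<in>B. dist b (g a0) < d \<longrightarrow> (\<forall>x\<in>X. \<bar>F b x - F (g a0) x\<bar> \<le> e)"
    using assms(2,3) unfolding continuous_on_sup_norm_def by blast
  moreover obtain d' where "d' > 0" "\<forall>a\<in>A. dist a a0 < d' \<longrightarrow> dist (g a) (g a0) < d"
    using assms(1) a0 d(1) unfolding continuous_on_iff by blast
  ultimately show "\<exists>d>0. \<forall>a\<in>A. dist a a0 < d \<longrightarrow> (\<forall>x\<in>X. \<bar>F (g a) x - F (g a0) x\<bar> \<le> e)"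
    using assms(2) by blast
qed

lemma continuous_on_sup_norm_compact_vanishing:
  assumes "compact A" "continuous_on_sup_norm A X F" "\<And>a. a \<in> A \<Longrightarrow> F a \<in> C_inf X" "e > 0"
  shows "\<exists>K. compact K \<and> (\<forall>a\<in>A. \<forall>x\<in>X - K. \<bar>F a x\<bar> < e)"
proof -
  have "\<forall>a0\<in>A. \<exists>d. d > 0 \<and> (\<forall>a\<in>A. dist a a0 < d \<longrightarrow> (\<forall>x\<in>X. \<bar>F a x - F a0 x\<bar> \<le> e/2))"
    using assms(2,4) unfolding continuous_on_sup_norm_def by (meson half_gt_zero)
  then obtain dl where dl: "\<And>a0. a0\<in>A \<Longrightarrow> dl a0 > 0 \<and> (\<forall>a\<in>A. dist a a0 < dl a0 \<longrightarrow> (\<forall>x\<in>X. \<bar>F a x - F a0 x\<bar> \<le> e/2))"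
    by metis
  have "\<forall>a0\<in>A. \<exists>K. compact K \<and> (\<forall>x\<in>X - K. \<bar>F a0 x\<bar> < e/2)"
  proof
    fix a0 assume "a0 \<in> A"
    then show "\<exists>K. compact K \<and> (\<forall>x\<in>X - K. \<bar>F a0 x\<bar> < e/2)"
      using assms(3)[of a0] assms(4) unfolding C_inf_def by (auto dest!: spec[of _ "e/2"])
  qed
  then obtain Kl where Kl: "\<And>a0. a0\<in>A \<Longrightarrow> compact (Kl a0) \<and> (\<forall>x\<in>X - Kl a0. \<bar>F a0 x\<bar> < e/2)"
    by metis
  obtain C where C: "C \<subseteq> A" "finite C" "A \<subseteq> (\<Union>c\<in>C. ball c (dl c))"
    by (rule compactE_image[OF assms(1), of A "\<lambda>c. ball c (dl c)"]) (use dl in force)+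
  show ?thesis
  proof (intro exI[of _ "\<Union>c\<in>C. Kl c"] conjI ballI)
    show "compact (\<Union>c\<in>C. Kl c)" using C Kl by (intro compact_UN) auto
    fix a x assume a: "a \<in> A" and x: "x \<in> X - (\<Union>c\<in>C. Kl c)"
    obtain c where c: "c \<in> C" "dist c a < dl c" using C(3) a by auto
    have "\<bar>F a x - F c x\<bar> \<le> e/2" using dl[of c] c C(1) a x by (auto simp: dist_commute)
    moreover have "\<bar>F c x\<bar> < e/2" using Kl[of c] c C(1) x by auto
    ultimately show "\<bar>F a x\<bar> < e" by linarith
  qed
qed

lemma continuous_on_sup_norm_compact_uniform:
  assumes "compact A" "continuous_on_sup_norm A X F" "e > 0"
  shows "\<exists>d>0. \<forall>a\<in>A. \<forall>a'\<in>A. dist a a' < d \<longrightarrow> (\<forall>x\<in>X. \<bar>F a x - F a' x\<bar> \<le> e)"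
proof -
  have "\<forall>a0\<in>A. \<exists>d. d > 0 \<and> (\<forall>a\<in>A. dist a a0 < d \<longrightarrow> (\<forall>x\<in>X. \<bar>F a x - F a0 x\<bar> \<le> e/2))"
    using assms(2,3) unfolding continuous_on_sup_norm_def by (meson half_gt_zero)
  then obtain dl where dl: "\<And>a0. a0\<in>A \<Longrightarrow> dl a0 > 0 \<and> (\<forall>a\<in>A. dist a a0 < dl a0 \<longrightarrow> (\<forall>x\<in>X. \<bar>F a x - F a0 x\<bar> \<le> e/2))"
    by metis
  obtain eps where eps: "eps > 0" "\<And>a. a \<in> A \<Longrightarrow> \<exists>G \<in> (\<lambda>c. ball c (dl c)) ` A. ball a eps \<subseteq> G"
    by (rule Heine_Borel_lemma[OF assms(1), of "(\<lambda>c. ball c (dl c)) ` A"]) (use dl in force)+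
  show ?thesis
  proof (intro exI[of _ eps] conjI ballI impI)
    fix a a' x assume a: "a \<in> A" "a' \<in> A" "dist a a' < eps" and x: "x \<in> X"
    obtain c where c: "c \<in> A" "ball a eps \<subseteq> ball c (dl c)" using eps(2)[OF a(1)] by auto
    have "a \<in> ball c (dl c)" "a' \<in> ball c (dl c)" using c(2) a(3) eps(1) by (auto simp: subset_iff)
    then have "\<bar>F a x - F c x\<bar> \<le> e/2" "\<bar>F a' x - F c x\<bar> \<le> e/2"
      using dl[OF c(1)] a x by (auto simp: dist_commute)
    then show "\<bar>F a x - F a' x\<bar> \<le> e" by linarith
  qed (use eps in auto)
qed

section \<open>Evolution operators of Markov transition kernels\<close>

lemma evol_nonneg: "(\<And>y. h y \<ge> (0::real)) \<Longrightarrow> evol P s t h x \<ge> 0"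
  unfolding evol_def by (rule integral_nonneg_AE) auto

lemma spacetime_sg_apply: "spacetime_sg P t f (s, x) = evol P s (s + t) (\<lambda>y. f (s + t, y)) x"
  by (simp add: spacetime_sg_def)

locale markov_system =
  fixes TT :: "real set" and P :: "real \<Rightarrow> real \<Rightarrow> real^'d \<Rightarrow> (real^'d) measure"
  assumes time_set: "time_set TT" and markov: "markov_transition TT P"
begin

lemma time_add_mem: "s \<in> TT \<Longrightarrow> 0 \<le> t \<Longrightarrow> s + t \<in> TT"
  using time_set unfolding time_set_def by auto

lemma closed_time: "closed TT"
  using time_set unfolding time_set_def by auto

lemma compact_time_interval: "compact (TT \<inter> {a..b})"
  using closed_time by (metis compact_Int_closed compact_Icc Int_commute)

lemma closed_spacetime: "closed (TT \<times> (UNIV :: (real^'d) set))"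
  using closed_time by (intro closed_Times) auto

lemma spacetime_nonempty: "TT \<times> (UNIV :: (real^'d) set) \<noteq> {}"
  using time_set unfolding time_set_def by auto

lemma transition_kernel:
  assumes "s \<in> TT" "t \<in> TT" "s \<le> t"
  shows "prob_space (P s t x)" "sets (P s t x) = sets borel"
    "P s t \<in> borel \<rightarrow>\<^sub>M subprob_algebra borel"
proof -
  have "(\<forall>x. prob_space (P s t x) \<and> sets (P s t x) = sets borel) \<and> P s t \<in> borel \<rightarrow>\<^sub>M subprob_algebra borel"
    using markov assms unfolding markov_transition_def by blast
  then show "prob_space (P s t x)" "sets (P s t x) = sets borel"
    "P s t \<in> borel \<rightarrow>\<^sub>M subprob_algebra borel" by simp_all
qed

lemma evol_integrable:
  assumes "s \<in> TT" "t \<in> TT" "s \<le> t" "h \<in> borel_measurable borel" "\<And>y. \<bar>h y\<bar> \<le> (B::real)"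
  shows "integrable (P s t x) h"
proof -
  interpret prob_space "P s t x" using transition_kernel assms(1-3) by simp
  show ?thesis
    using assms(4,5) measurable_cong_sets[OF transition_kernel(2)[OF assms(1-3)] refl]
    by (intro integrable_const_bound[where B=B]) auto
qed

lemma evol_abs_le:
  assumes "s \<in> TT" "t \<in> TT" "s \<le> t" "h \<in> borel_measurable borel" "\<And>y. \<bar>h y\<bar> \<le> B"
  shows "\<bar>evol P s t h x\<bar> \<le> B"
proof -
  interpret prob_space "P s t x" using transition_kernel assms(1-3) by simp
  have "integrable (P s t x) h" using evol_integrable assms by blast
  moreover have "AE y in P s t x. h y \<le> B" "AE y in P s t x. -B \<le> h y"
    using assms(5) by (auto simp: abs_le_iff minus_le_iff)
  ultimately have "evol P s t h x \<le> B" "-B \<le> evol P s t h x"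
    unfolding evol_def by (auto intro: integral_le_const integral_ge_const)
  then show ?thesis by simp
qed

lemma evol_linear:
  assumes "s \<in> TT" "t \<in> TT" "s \<le> t"
    and "f \<in> borel_measurable borel" "\<And>y. \<bar>f y\<bar> \<le> B"
    and "g \<in> borel_measurable borel" "\<And>y. \<bar>g y\<bar> \<le> C"
  shows "evol P s t (\<lambda>y. a * f y + b * g y) x = a * evol P s t f x + b * evol P s t g x"
  using evol_integrable[OF assms(1-5)] evol_integrable[OF assms(1-3,6,7)]
  unfolding evol_def by simp

lemma evol_diff:
  assumes "s \<in> TT" "t \<in> TT" "s \<le> t"
    and "f \<in> borel_measurable borel" "\<And>y. \<bar>f y\<bar> \<le> B"
    and "g \<in> borel_measurable borel" "\<And>y. \<bar>g y\<bar> \<le> C"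
  shows "evol P s t (\<lambda>y. f y - g y) x = evol P s t f x - evol P s t g x"
  using evol_integrable[OF assms(1-5)] evol_integrable[OF assms(1-3,6,7)]
  unfolding evol_def by simp

lemma evol_same_time:
  assumes "s \<in> TT" "h \<in> borel_measurable borel"
  shows "evol P s s h x = h x"
proof -
  have "P s s x = return borel x"
    using markov assms(1) unfolding markov_transition_def by blast
  then show ?thesis unfolding evol_def using assms(2) by (simp add: integral_return)
qed

lemma evol_chapman_kolmogorov:
  assumes "s \<in> TT" "r \<in> TT" "t \<in> TT" "s \<le> r" "r \<le> t"
    and "h \<in> borel_measurable borel" "\<And>y. \<bar>h y\<bar> \<le> B"
  shows "evol P s t h x = evol P s r (evol P r t h) x"
proof -
  have bind: "P s t x = P s r x \<bind> P r t"
    using markov assms(1-5) unfolding markov_transition_def by blast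
  interpret prob_space "P s r x" using transition_kernel assms(1,2,4) by simp
  have "integral\<^sup>L (P s r x \<bind> P r t) h = \<integral>y. integral\<^sup>L (P r t y) h \<partial>(P s r x)"
  proof (rule integral_bind[where K=borel and B=B and B'=1])
    show "P r t \<in> P s r x \<rightarrow>\<^sub>M subprob_algebra borel"
      using measurable_cong_sets[OF transition_kernel(2)[OF assms(1,2,4)] refl]
        transition_kernel(3)[OF assms(2,3,5)] by blast
    show "AE y in P s r x. emeasure (P r t y) (space (P r t y)) \<le> ennreal 1"
      using prob_space.emeasure_space_1[OF transition_kernel(1)[OF assms(2,3,5)]] by simp
  qed (use assms(6,7) finite_measure_axioms in auto)
  then show ?thesis unfolding evol_def bind .
qed

end

lemma feller_evolution_C_inf:
  "feller_evolution TT U \<Longrightarrow> s \<in> TT \<Longrightarrow> t \<in> TT \<Longrightarrow> s \<le> t \<Longrightarrow> f \<in> C_inf UNIV \<Longrightarrow>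
    U s t f \<in> C_inf UNIV"
  unfolding feller_evolution_def by (elim conjE) blast

lemma feller_evolution_continuous_on_sup_norm:
  assumes "feller_evolution TT U" "f \<in> C_inf UNIV"
  shows "continuous_on_sup_norm {(s, t). s \<in> TT \<and> t \<in> TT \<and> s \<le> t} UNIV (\<lambda>p. U (fst p) (snd p) f)"
proof (subst continuous_on_sup_norm_iff_tendsto)
  show "\<forall>a0\<in>{(s, t). s \<in> TT \<and> t \<in> TT \<and> s \<le> t}.
      ((\<lambda>a. supnorm UNIV (\<lambda>x. U (fst a) (snd a) f x - U (fst a0) (snd a0) f x)) \<longlongrightarrow> 0)
      (at a0 within {(s, t). s \<in> TT \<and> t \<in> TT \<and> s \<le> t})"
    using assms unfolding feller_evolution_def by (auto simp: case_prod_beta')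
qed (use assms feller_evolution_C_inf in auto)

lemma feller_semigroup_C_inf:
  "feller_semigroup S T \<Longrightarrow> t \<ge> 0 \<Longrightarrow> f \<in> C_inf S \<Longrightarrow> T t f \<in> C_inf S"
  unfolding feller_semigroup_def by (elim conjE) blast

lemma feller_semigroup_continuous_on_sup_norm:
  assumes "feller_semigroup S T" "S \<noteq> {}" "f \<in> C_inf S"
  shows "continuous_on_sup_norm {0..} S (\<lambda>r. T r f)"
proof (subst continuous_on_sup_norm_iff_tendsto)
  show "\<forall>t\<in>{0..}. ((\<lambda>r. supnorm S (\<lambda>z. T r f z - T t f z)) \<longlongrightarrow> 0) (at t within {0..})"
    using assms(1,3) unfolding feller_semigroup_def by auto
qed (use assms feller_semigroup_C_inf in auto)

context markov_system
begin

lemma feller_evolutionI: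
  assumes C_inf: "\<And>s t f. s \<in> TT \<Longrightarrow> t \<in> TT \<Longrightarrow> s \<le> t \<Longrightarrow> f \<in> C_inf UNIV \<Longrightarrow> evol P s t f \<in> C_inf UNIV"
    and cont: "\<And>f. f \<in> C_inf UNIV \<Longrightarrow>
      continuous_on_sup_norm {(s, t). s \<in> TT \<and> t \<in> TT \<and> s \<le> t} UNIV (\<lambda>p. evol P (fst p) (snd p) f)"
  shows "feller_evolution TT (evol P)"
  unfolding feller_evolution_def
proof (intro conjI ballI impI allI)
  fix s t assume st: "s \<in> TT" "t \<in> TT" "s \<le> t"
  fix f :: "real^'d \<Rightarrow> real" assume f: "f \<in> C_inf UNIV"
  obtain B where B: "\<And>y. \<bar>f y\<bar> \<le> B" using C_inf_bounded[OF f] by blast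
  note f_meas = C_inf_borel_measurable[OF f]
  show "evol P s t f \<in> C_inf UNIV" by (rule C_inf[OF st f])
  show "supnorm UNIV (evol P s t f) \<le> supnorm UNIV f"
    by (rule supnorm_least) (auto intro!: evol_abs_le[OF st f_meas] C_inf_abs_le_supnorm[OF f])
  show "0 \<le> evol P s t f x" if "\<forall>x. 0 \<le> f x" for x
    using that by (simp add: evol_nonneg)
  fix g :: "real^'d \<Rightarrow> real" and a b assume g: "g \<in> C_inf UNIV"
  obtain C where C: "\<And>y. \<bar>g y\<bar> \<le> C" using C_inf_bounded[OF g] by blast
  show "evol P s t (\<lambda>x. a * f x + b * g x) = (\<lambda>x. a * evol P s t f x + b * evol P s t g x)"
    using evol_linear[OF st f_meas B C_inf_borel_measurable[OF g] C] by auto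
next
  fix s and f :: "real^'d \<Rightarrow> real" assume "s \<in> TT" "f \<in> C_inf UNIV"
  then show "evol P s s f = f" using evol_same_time C_inf_borel_measurable by blast
next
  fix s r t and f :: "real^'d \<Rightarrow> real"
  assume srt: "s \<in> TT" "r \<in> TT" "t \<in> TT" "s \<le> r" "r \<le> t" and f: "f \<in> C_inf UNIV"
  obtain B where "\<And>y. \<bar>f y\<bar> \<le> B" using C_inf_bounded[OF f] by blast
  then show "evol P s t f = evol P s r (evol P r t f)"
    using evol_chapman_kolmogorov[OF srt C_inf_borel_measurable[OF f]] by blast
next
  fix v w and f :: "real^'d \<Rightarrow> real" assume vw: "v \<in> TT" "w \<in> TT" "v \<le> w" and f: "f \<in> C_inf UNIV"
  have "\<forall>a0\<in>{(s, t). s \<in> TT \<and> t \<in> TT \<and> s \<le> t}.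
      ((\<lambda>a. supnorm UNIV (\<lambda>x. evol P (fst a) (snd a) f x - evol P (fst a0) (snd a0) f x)) \<longlongrightarrow> 0)
      (at a0 within {(s, t). s \<in> TT \<and> t \<in> TT \<and> s \<le> t})"
  proof (subst continuous_on_sup_norm_iff_tendsto[symmetric])
    show "evol P (fst p) (snd p) f \<in> C_inf UNIV" if "p \<in> {(s, t). s \<in> TT \<and> t \<in> TT \<and> s \<le> t}" for p
      using C_inf f that by auto
  qed (simp_all add: cont[OF f])
  then show "((\<lambda>(s, t). supnorm UNIV (\<lambda>x. evol P s t f x - evol P v w f x)) \<longlongrightarrow> 0)
      (at (v, w) within {(s, t). s \<in> TT \<and> t \<in> TT \<and> s \<le> t})"
    using vw by (auto simp: case_prod_beta')
qed

lemma feller_semigroupI: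
  assumes C_inf: "\<And>t f. t \<ge> 0 \<Longrightarrow> f \<in> C_inf (TT \<times> UNIV) \<Longrightarrow> spacetime_sg P t f \<in> C_inf (TT \<times> UNIV)"
    and cont: "\<And>f. f \<in> C_inf (TT \<times> UNIV) \<Longrightarrow> continuous_on_sup_norm {0..} (TT \<times> UNIV) (\<lambda>r. spacetime_sg P r f)"
  shows "feller_semigroup (TT \<times> (UNIV :: (real^'d) set)) (spacetime_sg P)"
  unfolding feller_semigroup_def
proof (intro conjI ballI impI allI)
  fix t :: real assume t: "t \<ge> 0"
  fix f assume f: "f \<in> C_inf (TT \<times> (UNIV :: (real^'d) set))"
  show "spacetime_sg P t f \<in> C_inf (TT \<times> UNIV)" by (rule C_inf[OF t f])
  have st: "s + t \<in> TT" "s \<le> s + t" if "s \<in> TT" for s using time_add_mem t that by auto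
  note slice = C_inf_slice_measurable_bounded[OF f]
  show "supnorm (TT \<times> UNIV) (spacetime_sg P t f) \<le> supnorm (TT \<times> UNIV) f"
  proof (rule supnorm_least[OF spacetime_nonempty])
    fix z :: "real \<times> (real^'d)" assume "z \<in> TT \<times> UNIV"
    then obtain s x where z: "z = (s, x)" "s \<in> TT" by auto
    show "\<bar>spacetime_sg P t f z\<bar> \<le> supnorm (TT \<times> UNIV) f"
      unfolding z spacetime_sg_apply
      by (rule evol_abs_le[OF z(2) st[OF z(2)] slice[OF st(1)[OF z(2)]]])
  qed
  show "0 \<le> spacetime_sg P t f z" if "\<forall>z\<in>TT \<times> UNIV. 0 \<le> f z" "z \<in> TT \<times> UNIV" for z
    using that st by (auto simp: spacetime_sg_apply intro!: evol_nonneg)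
  fix g a b and z :: "real \<times> (real^'d)"
  assume g: "g \<in> C_inf (TT \<times> (UNIV :: (real^'d) set))" and "z \<in> TT \<times> UNIV"
  then obtain s x where z: "z = (s, x)" "s \<in> TT" by auto
  show "spacetime_sg P t (\<lambda>x. a * f x + b * g x) z = a * spacetime_sg P t f z + b * spacetime_sg P t g z"
    unfolding z spacetime_sg_apply
    by (rule evol_linear[OF z(2) st[OF z(2)] slice[OF st(1)[OF z(2)]]
          C_inf_slice_measurable_bounded[OF g st(1)[OF z(2)]]])
next
  fix f and z :: "real \<times> (real^'d)" assume f: "f \<in> C_inf (TT \<times> (UNIV :: (real^'d) set))" and "z \<in> TT \<times> UNIV"
  then obtain s x where z: "z = (s, x)" "s \<in> TT" by auto
  show "spacetime_sg P 0 f z = f z"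
    unfolding z spacetime_sg_apply
    using evol_same_time[OF z(2) C_inf_slice_measurable_bounded(1)[OF f z(2)]] by simp
next
  fix t1 t2 :: real and f and z :: "real \<times> (real^'d)" assume t: "t1 \<ge> 0" "t2 \<ge> 0"
    and f: "f \<in> C_inf (TT \<times> (UNIV :: (real^'d) set))" and "z \<in> TT \<times> UNIV"
  then obtain s x where z: "z = (s, x)" "s \<in> TT" by auto
  have r: "s + t1 \<in> TT" and u: "s + t1 + t2 \<in> TT" using time_add_mem z t by auto
  show "spacetime_sg P (t1 + t2) f z = spacetime_sg P t1 (spacetime_sg P t2 f) z"
    unfolding z spacetime_sg_apply add.assoc[symmetric]
    using evol_chapman_kolmogorov[OF z(2) r u _ _ C_inf_slice_measurable_bounded[OF f u]] t u by simp
next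
  fix f t assume f: "f \<in> C_inf (TT \<times> (UNIV :: (real^'d) set))" and "t \<ge> (0::real)"
  then show "((\<lambda>r. supnorm (TT \<times> UNIV) (\<lambda>z. spacetime_sg P r f z - spacetime_sg P t f z)) \<longlongrightarrow> 0)
      (at t within {0..})"
    using continuous_on_sup_norm_iff_tendsto[OF spacetime_nonempty, of "{0..}" "\<lambda>r. spacetime_sg P r f"]
      cont[OF f] C_inf[OF _ f] by auto
qed

end

section \<open>From the space-time semigroup to the evolution system\<close>

definition time_cutoff :: "real \<Rightarrow> real \<Rightarrow> real" where
  "time_cutoff w r = min 1 (max 0 (2 - \<bar>r - w\<bar>))"

definition cutoff_lift :: "real \<Rightarrow> ('a \<Rightarrow> real) \<Rightarrow> real \<times> 'a \<Rightarrow> real" where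
  "cutoff_lift w f z = time_cutoff w (fst z) * f (snd z)"

lemma time_cutoff_abs_le_1: "\<bar>time_cutoff w r\<bar> \<le> 1"
  unfolding time_cutoff_def by auto

lemma time_cutoff_eq_1: "\<bar>r - w\<bar> \<le> 1 \<Longrightarrow> time_cutoff w r = 1"
  unfolding time_cutoff_def by auto

lemma time_cutoff_eq_0: "r \<notin> {w-2..w+2} \<Longrightarrow> time_cutoff w r = 0"
  unfolding time_cutoff_def by auto

lemma continuous_time_cutoff: "continuous_on UNIV (time_cutoff w)"
  unfolding time_cutoff_def[abs_def] by (intro continuous_intros)

context markov_system
begin

lemma cutoff_lift_C_inf:
  fixes f :: "real^'d \<Rightarrow> real"
  assumes f: "f \<in> C_inf UNIV"
  shows "cutoff_lift w f \<in> C_inf (TT \<times> UNIV)"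
proof -
  have cf: "continuous_on UNIV f" using f unfolding C_inf_def by simp
  have "continuous_on (TT \<times> UNIV) (cutoff_lift w f)"
    unfolding cutoff_lift_def[abs_def]
    by (intro continuous_intros continuous_on_compose2[OF continuous_time_cutoff]
        continuous_on_compose2[OF cf]) auto
  moreover have "\<exists>K. compact K \<and> K \<subseteq> TT \<times> UNIV \<and> (\<forall>z\<in>TT \<times> UNIV - K. \<bar>cutoff_lift w f z\<bar> < e)"
    if e: "e > 0" for e
  proof -
    obtain Kf where Kf: "compact Kf" "\<forall>x\<in>UNIV - Kf. \<bar>f x\<bar> < e"
      using f e unfolding C_inf_def by blast
    have "\<bar>cutoff_lift w f z\<bar> < e" if z: "z \<in> TT \<times> UNIV - (TT \<inter> {w-2..w+2}) \<times> Kf" for z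
    proof (cases "fst z \<in> {w-2..w+2}")
      case True
      then have "\<bar>f (snd z)\<bar> < e" using z Kf(2) by (cases z) auto
      then show ?thesis
        using time_cutoff_abs_le_1[of w "fst z"] unfolding cutoff_lift_def abs_mult
        by (metis abs_ge_zero dual_order.strict_trans2 mult_left_le_one_le)
    next
      case False
      then show ?thesis unfolding cutoff_lift_def using time_cutoff_eq_0 e by simp
    qed
    moreover have "compact ((TT \<inter> {w-2..w+2}) \<times> Kf)"
      by (intro compact_Times compact_time_interval Kf(1))
    ultimately show ?thesis by blast
  qed
  ultimately show ?thesis unfolding C_inf_def by simp
qed

lemma spacetime_sg_cutoff_lift:
  "\<bar>t - w\<bar> \<le> 1 \<Longrightarrow> spacetime_sg P (t - s) (cutoff_lift w f) (s, x) = evol P s t f x"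
  by (simp add: spacetime_sg_apply cutoff_lift_def time_cutoff_eq_1)

context
  assumes feller: "feller_semigroup (TT \<times> (UNIV :: (real^'d) set)) (spacetime_sg P)"
begin

lemma evol_C_inf_if_feller_semigroup:
  fixes f :: "real^'d \<Rightarrow> real"
  assumes st: "s \<in> TT" "t \<in> TT" "s \<le> t" and f: "f \<in> C_inf UNIV"
  shows "evol P s t f \<in> C_inf UNIV"
proof -
  have "spacetime_sg P (t - s) (cutoff_lift t f) \<in> C_inf (TT \<times> UNIV)"
    using feller_semigroup_C_inf[OF feller _ cutoff_lift_C_inf[OF f]] st by simp
  then have "(\<lambda>x. spacetime_sg P (t - s) (cutoff_lift t f) (s, x)) \<in> C_inf UNIV"
    using C_inf_slice st(1) by blast
  then show ?thesis by (simp add: spacetime_sg_cutoff_lift)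
qed

lemma evol_continuous_on_sup_norm_if_feller_semigroup:
  fixes f :: "real^'d \<Rightarrow> real"
  assumes f: "f \<in> C_inf UNIV"
  shows "continuous_on_sup_norm {(s, t). s \<in> TT \<and> t \<in> TT \<and> s \<le> t} UNIV (\<lambda>p. evol P (fst p) (snd p) f)"
  unfolding continuous_on_sup_norm_def
proof (intro ballI allI impI)
  fix p0 and e :: real assume "p0 \<in> {(s, t). s \<in> TT \<and> t \<in> TT \<and> s \<le> t}" and e: "e > 0"
  then obtain v w where p0: "p0 = (v, w)" and vw: "v \<in> TT" "w \<in> TT" "v \<le> w" by auto
  define S where "S = TT \<times> (UNIV :: (real^'d) set)"
  define G where "G = cutoff_lift w f"
  define h0 where "h0 = spacetime_sg P (w - v) G"
  have G: "G \<in> C_inf S" unfolding G_def S_def by (rule cutoff_lift_C_inf[OF f])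
  have h0: "h0 \<in> C_inf S"
    unfolding h0_def using feller_semigroup_C_inf[OF feller[folded S_def] _ G] vw by simp
  obtain d1 where d1: "d1 > 0" "\<And>r z. r \<ge> 0 \<Longrightarrow> dist r (w - v) < d1 \<Longrightarrow> z \<in> S \<Longrightarrow>
      \<bar>spacetime_sg P r G z - h0 z\<bar> \<le> e/2"
    unfolding h0_def
    by (rule continuous_on_sup_normD[OF feller_semigroup_continuous_on_sup_norm[OF feller[folded S_def] _ G],
          of "w - v" "e/2"]) (use spacetime_nonempty vw e in \<open>auto simp: S_def\<close>)
  obtain d2 where d2: "d2 > 0" "\<forall>z\<in>S. \<forall>z'\<in>S. dist z z' < d2 \<longrightarrow> \<bar>h0 z - h0 z'\<bar> < e/2"
    using C_inf_uniformly_continuous[OF closed_spacetime h0[unfolded S_def], of "e/2"] e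
    unfolding S_def by auto
  show "\<exists>d>0. \<forall>p\<in>{(s, t). s \<in> TT \<and> t \<in> TT \<and> s \<le> t}. dist p p0 < d \<longrightarrow>
      (\<forall>x\<in>UNIV. \<bar>evol P (fst p) (snd p) f x - evol P (fst p0) (snd p0) f x\<bar> \<le> e)"
  proof (intro exI[of _ "min 1 (min (d1/2) d2)"] conjI ballI impI)
    fix p x assume "p \<in> {(s, t). s \<in> TT \<and> t \<in> TT \<and> s \<le> t}" and p: "dist p p0 < min 1 (min (d1/2) d2)"
    then obtain s t where pst: "p = (s, t)" and st: "s \<in> TT" "t \<in> TT" "s \<le> t" by auto
    have ds: "\<bar>s - v\<bar> < min 1 (min (d1/2) d2)" "\<bar>t - w\<bar> < min 1 (min (d1/2) d2)"
      using p dist_fst_le[of p p0] dist_snd_le[of p p0] unfolding pst p0 by (auto simp: dist_real_def)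
    have "dist (t - s) (w - v) < d1" using ds unfolding dist_real_def by linarith
    then have "\<bar>spacetime_sg P (t - s) G (s, x) - h0 (s, x)\<bar> \<le> e/2"
      using d1(2) st unfolding S_def by simp
    moreover have "dist (s, x) (v, x) < d2" using ds by (simp add: dist_Pair_Pair dist_real_def)
    then have "\<bar>h0 (s, x) - h0 (v, x)\<bar> < e/2" using d2(2) st vw unfolding S_def by simp
    moreover have "evol P s t f x = spacetime_sg P (t - s) G (s, x)" "evol P v w f x = h0 (v, x)"
      unfolding G_def h0_def using ds by (simp_all add: spacetime_sg_cutoff_lift)
    ultimately show "\<bar>evol P (fst p) (snd p) f x - evol P (fst p0) (snd p0) f x\<bar> \<le> e"
      unfolding pst p0 fst_conv snd_conv by linarith
  qed (use d1 d2 in simp)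
qed

end

end

section \<open>From the evolution system to the space-time semigroup\<close>

context markov_system
begin

lemma spacetime_sg_abs_le:
  assumes f: "f \<in> C_inf (TT \<times> UNIV)" and s: "s \<in> TT" and t: "t \<ge> 0"
    and B: "\<And>y. \<bar>f (s + t, y)\<bar> \<le> B"
  shows "\<bar>spacetime_sg P t f (s, x)\<bar> \<le> B"
  unfolding spacetime_sg_apply using s t B time_add_mem[OF s t]
  by (intro evol_abs_le C_inf_slice_measurable_bounded(1)[OF f]) auto

context
  assumes feller: "feller_evolution TT (evol P)"
begin

lemma spacetime_sg_slice_C_inf:
  assumes f: "f \<in> C_inf (TT \<times> UNIV)" and s: "s \<in> TT" and r: "r \<ge> 0"
  shows "(\<lambda>x. spacetime_sg P r f (s, x)) \<in> C_inf UNIV"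
  unfolding spacetime_sg_apply
  using feller_evolution_C_inf[OF feller s time_add_mem[OF s r] _ C_inf_slice[OF f time_add_mem[OF s r]]] r
  by (simp add: eta_contract_eq)

lemma spacetime_sg_continuous_on_sup_norm:
  fixes f :: "real \<times> (real^'d) \<Rightarrow> real"
  assumes f: "f \<in> C_inf (TT \<times> UNIV)"
  shows "continuous_on_sup_norm (TT \<times> {0::real..}) UNIV (\<lambda>p x. spacetime_sg P (snd p) f (fst p, x))"
  unfolding continuous_on_sup_norm_def
proof (intro ballI allI impI)
  fix p0 and e :: real assume "p0 \<in> TT \<times> {0::real..}" and e: "e > 0"
  then obtain s0 r0 where p0: "p0 = (s0, r0)" "s0 \<in> TT" "r0 \<ge> 0" by auto
  define t0 where "t0 = s0 + r0"
  have t0: "t0 \<in> TT" "s0 \<le> t0" unfolding t0_def using time_add_mem p0 by auto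
  define h where "h = (\<lambda>y. f (t0, y))"
  have h: "h \<in> C_inf UNIV" unfolding h_def by (rule C_inf_slice[OF f t0(1)])
  obtain d1 where d1: "d1 > 0" "\<forall>z\<in>TT \<times> UNIV. \<forall>z'\<in>TT \<times> UNIV. dist z z' < d1 \<longrightarrow> \<bar>f z - f z'\<bar> < e/2"
    using C_inf_uniformly_continuous[OF closed_spacetime f, of "e/2"] e by auto
  obtain d2 where d2: "d2 > 0" "\<And>s t x. s \<in> TT \<Longrightarrow> t \<in> TT \<Longrightarrow> s \<le> t \<Longrightarrow> dist (s, t) (s0, t0) < d2 \<Longrightarrow>
      \<bar>evol P s t h x - evol P s0 t0 h x\<bar> \<le> e/2"
    by (rule continuous_on_sup_normD[OF feller_evolution_continuous_on_sup_norm[OF feller h], of "(s0, t0)" "e/2"])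
      (use p0(2) t0 e in auto)
  show "\<exists>d>0. \<forall>p\<in>TT \<times> {0::real..}. dist p p0 < d \<longrightarrow>
      (\<forall>x\<in>UNIV. \<bar>spacetime_sg P (snd p) f (fst p, x) - spacetime_sg P (snd p0) f (fst p0, x)\<bar> \<le> e)"
  proof (intro exI[of _ "min (d1/2) (d2/3)"] conjI ballI impI)
    fix p x assume "p \<in> TT \<times> {0::real..}" and dp: "dist p p0 < min (d1/2) (d2/3)"
    then obtain s r where p: "p = (s, r)" "s \<in> TT" "r \<ge> 0" by auto
    define t where "t = s + r"
    have t: "t \<in> TT" "s \<le> t" unfolding t_def using time_add_mem p by auto
    have ds: "\<bar>s - s0\<bar> < min (d1/2) (d2/3)" "\<bar>t - t0\<bar> < 2 * min (d1/2) (d2/3)"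
      using dp dist_fst_le[of p p0] dist_snd_le[of p p0] unfolding p p0 t_def t0_def
      by (auto simp: dist_real_def)
    define g where "g = (\<lambda>y. f (t, y))"
    have g: "g \<in> C_inf UNIV" unfolding g_def by (rule C_inf_slice[OF f t(1)])
    have "\<bar>g y - h y\<bar> \<le> e/2" for y
    proof -
      have "dist (t, y) (t0, y) < d1" using ds by (simp add: dist_Pair_Pair dist_real_def)
      then show ?thesis unfolding g_def h_def using d1(2) t(1) t0(1) by fastforce
    qed
    then have "\<bar>evol P s t (\<lambda>y. g y - h y) x\<bar> \<le> e/2"
      using C_inf_borel_measurable[OF g] C_inf_borel_measurable[OF h]
      by (intro evol_abs_le[OF p(2) t]) auto
    moreover obtain Bg Bh where "\<And>y. \<bar>g y\<bar> \<le> Bg" "\<And>y. \<bar>h y\<bar> \<le> Bh"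
      using C_inf_bounded[OF g] C_inf_bounded[OF h] by auto
    ultimately have "\<bar>evol P s t g x - evol P s t h x\<bar> \<le> e/2"
      using evol_diff[OF p(2) t C_inf_borel_measurable[OF g] _ C_inf_borel_measurable[OF h]] by metis
    moreover have "dist (s, t) (s0, t0) < d2"
      using dist_Pair_le[of s t s0 t0] ds unfolding dist_real_def by linarith
    then have "\<bar>evol P s t h x - evol P s0 t0 h x\<bar> \<le> e/2"
      using d2(2) p(2) t by blast
    moreover have "spacetime_sg P r f (s, x) = evol P s t g x" "spacetime_sg P r0 f (s0, x) = evol P s0 t0 h x"
      unfolding spacetime_sg_apply t_def g_def t0_def h_def by simp_all
    ultimately show "\<bar>spacetime_sg P (snd p) f (fst p, x) - spacetime_sg P (snd p0) f (fst p0, x)\<bar> \<le> e"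
      unfolding p p0 fst_conv snd_conv by linarith
  qed (use d1 d2 in simp)
qed

lemma spacetime_sg_continuous:
  fixes f :: "real \<times> (real^'d) \<Rightarrow> real"
  assumes f: "f \<in> C_inf (TT \<times> UNIV)" and t: "t \<ge> 0"
  shows "continuous_on (TT \<times> UNIV) (spacetime_sg P t f)"
  unfolding continuous_on_iff
proof (intro ballI allI impI)
  fix z0 :: "real \<times> (real^'d)" and e :: real assume "z0 \<in> TT \<times> UNIV" and e: "e > 0"
  then obtain s0 x0 where z0: "z0 = (s0, x0)" "s0 \<in> TT" by auto
  have "continuous_on_sup_norm TT UNIV (\<lambda>s. (\<lambda>p x. spacetime_sg P (snd p) f (fst p, x)) (s, t))"
    by (rule continuous_on_sup_norm_compose[OF continuous_on_Pair[OF continuous_on_id continuous_on_const]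
          _ spacetime_sg_continuous_on_sup_norm[OF f]]) (use t in auto)
  then have "continuous_on_sup_norm TT UNIV (\<lambda>s x. spacetime_sg P t f (s, x))" by simp
  then obtain d1 where d1: "d1 > 0"
    "\<And>s x. s \<in> TT \<Longrightarrow> dist s s0 < d1 \<Longrightarrow> \<bar>spacetime_sg P t f (s, x) - spacetime_sg P t f (s0, x)\<bar> \<le> e/2"
    by (rule continuous_on_sup_normD[where e="e/2", OF _ z0(2)]) (use e in auto)
  have "continuous_on UNIV (\<lambda>x. spacetime_sg P t f (s0, x))"
    using spacetime_sg_slice_C_inf[OF f z0(2) t] unfolding C_inf_def by simp
  then obtain d2 where d2: "d2 > 0"
    "\<forall>x. dist x x0 < d2 \<longrightarrow> dist (spacetime_sg P t f (s0, x)) (spacetime_sg P t f (s0, x0)) < e/2"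
    unfolding continuous_on_iff using e by (meson UNIV_I half_gt_zero)
  show "\<exists>d>0. \<forall>z\<in>TT \<times> UNIV. dist z z0 < d \<longrightarrow> dist (spacetime_sg P t f z) (spacetime_sg P t f z0) < e"
  proof (intro exI[of _ "min d1 d2"] conjI ballI impI)
    fix z :: "real \<times> (real^'d)" assume "z \<in> TT \<times> UNIV" and dz: "dist z z0 < min d1 d2"
    then obtain s x where z: "z = (s, x)" "s \<in> TT" by auto
    have "dist s s0 < d1" "dist x x0 < d2"
      using dz dist_fst_le[of z z0] dist_snd_le[of z z0] unfolding z z0 by auto
    then have "\<bar>spacetime_sg P t f (s, x) - spacetime_sg P t f (s0, x)\<bar> \<le> e/2"
      "\<bar>spacetime_sg P t f (s0, x) - spacetime_sg P t f (s0, x0)\<bar> < e/2"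
      using d1(2) z(2) d2(2) by (auto simp: dist_real_def)
    then show "dist (spacetime_sg P t f z) (spacetime_sg P t f z0) < e"
      unfolding z z0 dist_real_def by linarith
  qed (use d1 d2 in simp)
qed

lemma spacetime_sg_vanishing:
  fixes f :: "real \<times> (real^'d) \<Rightarrow> real"
  assumes f: "f \<in> C_inf (TT \<times> UNIV)" and t: "t \<ge> 0" and e: "e > 0"
  shows "\<exists>K. compact K \<and> K \<subseteq> TT \<times> UNIV \<and> (\<forall>z\<in>TT \<times> UNIV - K. \<bar>spacetime_sg P t f z\<bar> < e)"
proof -
  obtain R where R: "\<And>r y. r \<in> TT \<Longrightarrow> \<bar>r\<bar> > R \<Longrightarrow> \<bar>f (r, y)\<bar> < e/2"
    using C_inf_time_tail[OF f, of "e/2"] e by auto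
  define A where "A = TT \<inter> {-R-t..R-t}"
  have "continuous_on_sup_norm A UNIV (\<lambda>s. (\<lambda>p x. spacetime_sg P (snd p) f (fst p, x)) (s, t))"
    by (rule continuous_on_sup_norm_compose[OF continuous_on_Pair[OF continuous_on_id continuous_on_const]
          _ spacetime_sg_continuous_on_sup_norm[OF f]]) (use t in \<open>auto simp: A_def\<close>)
  then have "continuous_on_sup_norm A UNIV (\<lambda>s x. spacetime_sg P t f (s, x))" by simp
  moreover have "(\<lambda>x. spacetime_sg P t f (s, x)) \<in> C_inf UNIV" if "s \<in> A" for s
    using spacetime_sg_slice_C_inf[OF f _ t] that unfolding A_def by blast
  ultimately have "\<exists>K. compact K \<and> (\<forall>s\<in>A. \<forall>x\<in>UNIV - K. \<bar>spacetime_sg P t f (s, x)\<bar> < e)"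
    by (rule continuous_on_sup_norm_compact_vanishing[OF compact_time_interval[of "-R-t" "R-t", folded A_def] _ _ e])
  then obtain K where K: "compact K" "\<And>s x. s \<in> A \<Longrightarrow> x \<notin> K \<Longrightarrow> \<bar>spacetime_sg P t f (s, x)\<bar> < e"
    by blast
  have "\<bar>spacetime_sg P t f (s, x)\<bar> < e" if "s \<in> TT" "(s, x) \<notin> A \<times> K" for s x
  proof (cases "s \<in> A")
    case True
    then show ?thesis using K(2) that by auto
  next
    case False
    then have "\<bar>s + t\<bar> > R" using that(1) unfolding A_def by auto
    then have "\<bar>f (s + t, y)\<bar> \<le> e/2" for y using R time_add_mem[OF that(1) t] less_imp_le by blast
    then have "\<bar>spacetime_sg P t f (s, x)\<bar> \<le> e/2" by (rule spacetime_sg_abs_le[OF f that(1) t])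
    then show ?thesis using e by linarith
  qed
  moreover have "compact (A \<times> K)" unfolding A_def by (intro compact_Times compact_time_interval K(1))
  ultimately show ?thesis unfolding A_def by blast
qed

lemma spacetime_sg_C_inf:
  assumes "f \<in> C_inf (TT \<times> UNIV)" "t \<ge> 0"
  shows "spacetime_sg P t f \<in> C_inf (TT \<times> UNIV)"
  using spacetime_sg_continuous[OF assms] spacetime_sg_vanishing[OF assms] unfolding C_inf_def by blast

lemma spacetime_sg_strongly_continuous:
  fixes f :: "real \<times> (real^'d) \<Rightarrow> real"
  assumes f: "f \<in> C_inf (TT \<times> UNIV)"
  shows "continuous_on_sup_norm {0..} (TT \<times> UNIV) (\<lambda>r. spacetime_sg P r f)"
  unfolding continuous_on_sup_norm_def
proof (intro ballI allI impI)
  fix t0 e :: real assume "t0 \<in> {0..}" and e: "e > 0"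
  then have t0: "t0 \<ge> 0" by simp
  obtain R where R: "\<And>r y. r \<in> TT \<Longrightarrow> \<bar>r\<bar> > R \<Longrightarrow> \<bar>f (r, y)\<bar> < e/2"
    using C_inf_time_tail[OF f, of "e/2"] e by auto
  define A where "A = TT \<inter> {-R-1-t0..R+1-t0}"
  define B where "B = {max 0 (t0-1)..t0+1}"
  have "compact (A \<times> B)" unfolding A_def B_def by (intro compact_Times compact_time_interval compact_Icc)
  moreover have "continuous_on_sup_norm (A \<times> B) UNIV (\<lambda>p x. spacetime_sg P (snd p) f (fst p, x))"
    by (rule continuous_on_sup_norm_subset[OF spacetime_sg_continuous_on_sup_norm[OF f]])
      (auto simp: A_def B_def)
  ultimately have "\<exists>d>0. \<forall>p\<in>A \<times> B. \<forall>p'\<in>A \<times> B. dist p p' < d \<longrightarrow>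
      (\<forall>x\<in>UNIV. \<bar>spacetime_sg P (snd p) f (fst p, x) - spacetime_sg P (snd p') f (fst p', x)\<bar> \<le> e)"
    using e by (rule continuous_on_sup_norm_compact_uniform)
  then obtain d where d: "d > 0" "\<And>p p' x. p \<in> A \<times> B \<Longrightarrow> p' \<in> A \<times> B \<Longrightarrow> dist p p' < d \<Longrightarrow>
      \<bar>spacetime_sg P (snd p) f (fst p, x) - spacetime_sg P (snd p') f (fst p', x)\<bar> \<le> e"
    by blast
  show "\<exists>d>0. \<forall>r\<in>{0..}. dist r t0 < d \<longrightarrow> (\<forall>z\<in>TT \<times> UNIV. \<bar>spacetime_sg P r f z - spacetime_sg P t0 f z\<bar> \<le> e)"
  proof (intro exI[of _ "min d 1"] conjI ballI impI)
    fix r z assume "r \<in> {0..}" "dist r t0 < min d 1" and "z \<in> TT \<times> (UNIV :: (real^'d) set)"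
    then obtain s x where z: "z = (s, x)" "s \<in> TT" and r: "r \<ge> 0" "\<bar>r - t0\<bar> < 1" "dist r t0 < d"
      by (auto simp: dist_real_def)
    show "\<bar>spacetime_sg P r f z - spacetime_sg P t0 f z\<bar> \<le> e"
    proof (cases "s \<in> A")
      case True
      then have "(s, r) \<in> A \<times> B" "(s, t0) \<in> A \<times> B" using r t0 unfolding B_def by auto
      moreover have "dist (s, r) (s, t0) < d" using r(3) by (simp add: dist_Pair_Pair)
      ultimately show ?thesis unfolding z using d(2) by fastforce
    next
      case False
      then have "\<bar>s + t0\<bar> > R" "\<bar>s + r\<bar> > R" using z(2) r(2) unfolding A_def by auto
      then have "\<bar>f (s + t0, y)\<bar> \<le> e/2" "\<bar>f (s + r, y)\<bar> \<le> e/2" for y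
        using R time_add_mem[OF z(2)] t0 r(1) less_imp_le by blast+
      then have "\<bar>spacetime_sg P t0 f (s, x)\<bar> \<le> e/2" "\<bar>spacetime_sg P r f (s, x)\<bar> \<le> e/2"
        using spacetime_sg_abs_le[OF f z(2)] t0 r(1) by blast+
      then show ?thesis unfolding z by linarith
    qed
  qed (use d in simp)
qed

end

end

theorem theorem3p2:
  fixes TT :: "real set"
    and P :: "real \<Rightarrow> real \<Rightarrow> real^'d \<Rightarrow> (real^'d) measure"
  assumes "time_set TT"
    and "markov_transition TT P"
  shows "feller_evolution TT (evol P) \<longleftrightarrow>
         feller_semigroup (TT \<times> (UNIV :: (real^'d) set)) (spacetime_sg P)"
proof -
  interpret markov_system TT P by unfold_locales (fact assms)+
  show ?thesis
  proof
    assume feller: "feller_evolution TT (evol P)"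
    show "feller_semigroup (TT \<times> UNIV) (spacetime_sg P)"
      by (rule feller_semigroupI[OF spacetime_sg_C_inf[OF feller] spacetime_sg_strongly_continuous[OF feller]])
  next
    assume feller: "feller_semigroup (TT \<times> UNIV) (spacetime_sg P)"
    show "feller_evolution TT (evol P)"
      by (rule feller_evolutionI[OF evol_C_inf_if_feller_semigroup[OF feller]
            evol_continuous_on_sup_norm_if_feller_semigroup[OF feller]])
  qed
qed

end
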